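(* For every set $\Gamma\cup\{\varphi\}$ of formulas over $\Sigma^\circ$: if $\Gamma\vdash_{\bf mbCcl}\varphi$ then $\Gamma\vDash^{\mathsf{RN}}_{\mathcal{M}_{\bf mbCcl}}\varphi$.
   Context: $\Sigma^\circ$ is the signature with unary $\neg,\circ$ and binary $\wedge,\vee,\to$; formulas are built from a denumerable set of propositional variables. ${\bf mbCcl}$ is the Hilbert calculus with Modus Ponens as only rule and axiom schemata: (Ax1) $\alpha\to(\beta\to\alpha)$; (Ax2) $(\alpha\to(\beta\to\gamma))\to((\alpha\to\beta)\to(\alpha\to\gamma))$; (Ax3) $\alpha\to(\beta\to(\alpha\wedge\beta))$; (Ax4) $(\alpha\wedge\beta)\to\alpha$; (Ax5) $(\alpha\wedge\beta)\to\beta$; (Ax6) $\alpha\to(\alpha\vee\beta)$; (Ax7) $\beta\to(\alpha\vee\beta)$; (Ax8) $(\alpha\to\gamma)\to((\beta\to\gamma)\to((\alpha\vee\beta)\to\gamma))$; (Ax9) $\alpha\vee\neg\alpha$; $\alpha\vee(\alpha\to\beta)$; (bc1) $\circ\alpha\to(\alpha\to(\neg\alpha\to\beta))$; (cl) $\neg(\alpha\wedge\neg\alpha)\to\circ\alpha$. $\Gamma\vdash_{\bf mbCcl}\varphi$ means derivability from $\Gamma$. $\mathcal{A}_{\bf mbCcl}$ is the $\Sigma^\circ$-multialgebra with universe $\{F,t,T\}$, $D=\{t,T\}$, $U=\{F\}$, and multioperations: $x\tilde\vee y=U$ if $x=y=F$, otherwise $D$; $x\tilde\wedge y=U$ if $F\in\{x,y\}$,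 otherwise $D$; $\tilde\neg F=D$, $\tilde\neg t=D$, $\tilde\neg T=U$; $x\tilde\to y=D$ if $x=F$, $x\tilde\to F=U$ if $x\in\{t,T\}$, $x\tilde\to y=D$ if $x,y\in\{t,T\}$; $\tilde\circ F=D$, $\tilde\circ t=U$, $\tilde\circ T=D$. A valuation is a map $\nu$ from formulas to $\{F,t,T\}$ with $\nu(\#\alpha)\in\tilde\#\nu(\alpha)$ for unary $\#$ and $\nu(\alpha\#\beta)\in\nu(\alpha)\tilde\#\nu(\beta)$ for binary $\#$. $\mathcal{F}_{\bf mbCcl}$ is the set of valuations $\nu$ such that $\nu(\alpha)=t$ implies $\nu(\alpha\wedge\neg\alpha)=T$, for every formula $\alpha$. $\mathcal{M}_{\bf mbCcl}=(\mathcal{A}_{\bf mbCcl},D,\mathcal{F}_{\bf mbCcl})$, and $\Gamma\vDash^{\mathsf{RN}}_{\mathcal{M}_{\bf mbCcl}}\varphi$ iff every $\nu\in\mathcal{F}_{\bf mbCcl}$ with $\nu[\Gamma]\subseteq D$ satisfies $\nu(\varphi)\in D$. *)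

theory Defs
  imports Main
begin

datatype fm = Var nat | Neg fm | Circ fm | And fm fm | Or fm fm | Imp fm fm

inductive derivable :: "fm set \<Rightarrow> fm \<Rightarrow> bool" for \<Gamma> :: "fm set" where
  prem: "\<phi> \<in> \<Gamma> \<Longrightarrow> derivable \<Gamma> \<phi>"
| Ax1: "derivable \<Gamma> (Imp a (Imp b a))"
| Ax2: "derivable \<Gamma> (Imp (Imp a (Imp b c)) (Imp (Imp a b) (Imp a c)))"
| Ax3: "derivable \<Gamma> (Imp a (Imp b (And a b)))"
| Ax4: "derivable \<Gamma> (Imp (And a b) a)"
| Ax5: "derivable \<Gamma> (Imp (And a b) b)"
| Ax6: "derivable \<Gamma> (Imp a (Or a b))"
| Ax7: "derivable \<Gamma> (Imp b (Or a b))"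
| Ax8: "derivable \<Gamma> (Imp (Imp a c) (Imp (Imp b c) (Imp (Or a b) c)))"
| Ax9: "derivable \<Gamma> (Or a (Neg a))"
| Ax10: "derivable \<Gamma> (Or a (Imp a b))"
| bc1: "derivable \<Gamma> (Imp (Circ a) (Imp a (Imp (Neg a) b)))"
| cl: "derivable \<Gamma> (Imp (Neg (And a (Neg a))) (Circ a))"
| MP: "derivable \<Gamma> a \<Longrightarrow> derivable \<Gamma> (Imp a b) \<Longrightarrow> derivable \<Gamma> b"

datatype tv = F | t | T

definition Des :: "tv set" where "Des = {t, T}"
definition Und :: "tv set" where "Und = {F}"

definition or_m :: "tv \<Rightarrow> tv \<Rightarrow> tv set" where
  "or_m x y = (if x = F \<and> y = F then Und else Des)"
definition and_m :: "tv \<Rightarrow> tv \<Rightarrow> tv set" where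
  "and_m x y = (if x = F \<or> y = F then Und else Des)"
definition neg_m :: "tv \<Rightarrow> tv set" where
  "neg_m x = (if x = T then Und else Des)"
definition imp_m :: "tv \<Rightarrow> tv \<Rightarrow> tv set" where
  "imp_m x y = (if x = F then Des else if y = F then Und else Des)"
definition circ_m :: "tv \<Rightarrow> tv set" where
  "circ_m x = (if x = t then Und else Des)"

definition valuation :: "(fm \<Rightarrow> tv) \<Rightarrow> bool" where
  "valuation v \<longleftrightarrow>
     (\<forall>a. v (Neg a) \<in> neg_m (v a)) \<and>
     (\<forall>a. v (Circ a) \<in> circ_m (v a)) \<and>
     (\<forall>a b. v (And a b) \<in> and_m (v a) (v b)) \<and>
     (\<forall>a b. v (Or a b) \<in> or_m (v a) (v b)) \<and>
     (\<forall>a b. v (Imp a b) \<in> imp_m (v a) (v b))"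

definition F_mbCcl :: "(fm \<Rightarrow> tv) set" where
  "F_mbCcl = {v. valuation v \<and> (\<forall>a. v a = t \<longrightarrow> v (And a (Neg a)) = T)}"

definition RN_consequence :: "fm set \<Rightarrow> fm \<Rightarrow> bool" where
  "RN_consequence \<Gamma> \<phi> \<longleftrightarrow>
     (\<forall>v \<in> F_mbCcl. v ` \<Gamma> \<subseteq> Des \<longrightarrow> v \<phi> \<in> Des)"

end

theory Submission
  imports Defs
begin

text \<open>Although the multioperations are nondeterministic, whether a compound formula is
  designated is determined by its immediate subformulas: \<open>\<and>, \<or>, \<rightarrow>\<close> behave
  classically on designation, \<open>\<not>a\<close> is designated iff \<open>a \<noteq> T\<close> and \<open>\<circ>a\<close> iff \<open>a \<noteq> t\<close>.
  Hence every axiom except (cl) is designated under every valuation, designation is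
  preserved by Modus Ponens, and (cl) holds because the restriction defining \<open>F_mbCcl\<close>
  forces \<open>a \<and> \<not>a\<close> to take the value \<open>T\<close> whenever \<open>a\<close> takes \<open>t\<close>.\<close>

lemma valuation_Imp:
  assumes "valuation v"
  shows "v (Imp a b) \<in> Des \<longleftrightarrow> v a \<notin> Des \<or> v b \<in> Des"
proof -
  have "v (Imp a b) \<in> imp_m (v a) (v b)"
    using assms unfolding valuation_def by blast
  then show ?thesis
    by (cases "v a"; cases "v b") (auto simp: imp_m_def Des_def Und_def)
qed

lemma valuation_And:
  assumes "valuation v"
  shows "v (And a b) \<in> Des \<longleftrightarrow> v a \<in> Des \<and> v b \<in> Des"
proof -
  have "v (And a b) \<in> and_m (v a) (v b)"
    using assms unfolding valuation_def by blast
  then show ?thesis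
    by (cases "v a"; cases "v b") (auto simp: and_m_def Des_def Und_def)
qed

lemma valuation_Or:
  assumes "valuation v"
  shows "v (Or a b) \<in> Des \<longleftrightarrow> v a \<in> Des \<or> v b \<in> Des"
proof -
  have "v (Or a b) \<in> or_m (v a) (v b)"
    using assms unfolding valuation_def by blast
  then show ?thesis
    by (cases "v a"; cases "v b") (auto simp: or_m_def Des_def Und_def)
qed

lemma valuation_Neg:
  assumes "valuation v"
  shows "v (Neg a) \<in> Des \<longleftrightarrow> v a \<noteq> T"
proof -
  have "v (Neg a) \<in> neg_m (v a)"
    using assms unfolding valuation_def by blast
  then show ?thesis
    by (cases "v a") (auto simp: neg_m_def Des_def Und_def)
qed

lemma valuation_Circ:
  assumes "valuation v"
  shows "v (Circ a) \<in> Des \<longleftrightarrow> v a \<noteq> t"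
proof -
  have "v (Circ a) \<in> circ_m (v a)"
    using assms unfolding valuation_def by blast
  then show ?thesis
    by (cases "v a") (auto simp: circ_m_def Des_def Und_def)
qed

lemma derivable_designated:
  assumes "derivable \<Gamma> \<phi>" and "v \<in> F_mbCcl" and "v ` \<Gamma> \<subseteq> Des"
  shows "v \<phi> \<in> Des"
proof -
  have val: "valuation v" and restricted: "\<And>a. v a = t \<Longrightarrow> v (And a (Neg a)) = T"
    using assms(2) by (simp_all add: F_mbCcl_def)
  note truth_conditions =
    valuation_Imp[OF val] valuation_And[OF val] valuation_Or[OF val]
    valuation_Neg[OF val] valuation_Circ[OF val]
  show ?thesis
    using assms(1)
  proof (induction rule: derivable.induct)
    case (prem \<phi>)
    then show ?case using assms(3) by blast
  next
    case (Ax9 a)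
    have "v a \<in> Des \<or> v a \<noteq> T"
      by (auto simp: Des_def)
    then show ?case by (simp add: truth_conditions)
  next
    case (bc1 a b)
    have "v a \<notin> Des \<or> v a = t \<or> v a = T"
      by (cases "v a") (simp_all add: Des_def)
    then show ?case by (auto simp: truth_conditions)
  next
    case (cl a)
    show ?case using restricted[of a] by (auto simp: truth_conditions)
  qed (auto simp: truth_conditions)
qed

theorem mainTheorem3:
  fixes \<Gamma> :: "fm set" and \<phi> :: fm
  assumes "derivable \<Gamma> \<phi>"
  shows "RN_consequence \<Gamma> \<phi>"
  using derivable_designated[OF assms] by (simp add: RN_consequence_def)

end
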